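(* Let $G=(V,E)$ be an undirected, unweighted graph with $|V|=n$ and $|E|=m$. Let $\varepsilon\in(0,\frac1{18}]$ and suppose that $H$ is a $(1\pm\varepsilon)$-spectral sparsifier of $G$. Then $\widehat{H}$, the unweighted version of $H$, is an $\widetilde{O}(\sqrt{m})$-spanner of $G$.
   Context: A $(1\pm\varepsilon)$-spectral sparsifier of $G$ is a weighted graph $H=(V,E_H,w)$ with $E_H\subseteq E$ and positive weights such that $(1-\varepsilon)L_H\preceq L_G\preceq(1+\varepsilon)L_H$, where $L_G=B_G^\top B_G$ ($B_G$ the edge–vertex incidence matrix), $L_H=B_H^\top WB_H$ ($W$ the diagonal matrix of edge weights), and $A\preceq B$ means $x^\top Ax\le x^\top Bx$ for all $x$. $\widehat{H}$ is the graph $(V,E_H)$ with all weights equal to $1$. A subgraph $K$ of $G$ is a $t$-spanner if $d_K(u,v)\le t\cdot d_G(u,v)$ for all $u,v\in V$ ($d$ = shortest-path distance). $\widetilde{O}(f)$ means $f\cdot\mathrm{polylog}(n)$. *)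

theory Defs
  imports "HOL-Library.Extended_Nat" Complex_Main
begin

definition simple_graph :: "nat set \<Rightarrow> nat set set \<Rightarrow> bool" where
  "simple_graph V E \<longleftrightarrow> finite V \<and> (\<forall>e\<in>E. e \<subseteq> V \<and> card e = 2)"

definition laplacian :: "nat set set \<Rightarrow> (nat set \<Rightarrow> real) \<Rightarrow> nat \<Rightarrow> nat \<Rightarrow> real" where
  "laplacian E w u v =
     (if u = v then (\<Sum>e\<in>{e\<in>E. u \<in> e}. w e)
      else (if {u, v} \<in> E then - w {u, v} else 0))"

definition quad_form :: "nat set \<Rightarrow> (nat \<Rightarrow> nat \<Rightarrow> real) \<Rightarrow> (nat \<Rightarrow> real) \<Rightarrow> real" where
  "quad_form V L x = (\<Sum>u\<in>V. \<Sum>v\<in>V. x u * L u v * x v)"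

definition loewner_le :: "nat set \<Rightarrow> (nat \<Rightarrow> nat \<Rightarrow> real) \<Rightarrow> (nat \<Rightarrow> nat \<Rightarrow> real) \<Rightarrow> bool" where
  "loewner_le V A B \<longleftrightarrow> (\<forall>x. quad_form V A x \<le> quad_form V B x)"

definition spectral_sparsifier ::
  "real \<Rightarrow> nat set \<Rightarrow> nat set set \<Rightarrow> nat set set \<Rightarrow> (nat set \<Rightarrow> real) \<Rightarrow> bool" where
  "spectral_sparsifier eps V E EH w \<longleftrightarrow>
     EH \<subseteq> E \<and> (\<forall>e\<in>EH. w e > 0) \<and>
     loewner_le V (\<lambda>u v. (1 - eps) * laplacian EH w u v) (laplacian E (\<lambda>_. 1)) \<and>
     loewner_le V (laplacian E (\<lambda>_. 1)) (\<lambda>u v. (1 + eps) * laplacian EH w u v)"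

definition is_walk :: "nat set set \<Rightarrow> nat list \<Rightarrow> bool" where
  "is_walk E p \<longleftrightarrow> p \<noteq> [] \<and> (\<forall>i. Suc i < length p \<longrightarrow> {p ! i, p ! Suc i} \<in> E)"

text \<open>Shortest-path (hop) distance; \<infinity> if no walk exists.\<close>
definition hop_dist :: "nat set set \<Rightarrow> nat \<Rightarrow> nat \<Rightarrow> enat" where
  "hop_dist E u v = Inf {enat (length p - 1) | p. is_walk E p \<and> hd p = u \<and> last p = v}"

definition spanner :: "real \<Rightarrow> nat set \<Rightarrow> nat set set \<Rightarrow> nat set set \<Rightarrow> bool" where
  "spanner t V E EK \<longleftrightarrow> EK \<subseteq> E \<and>
     (\<forall>u\<in>V. \<forall>v\<in>V. hop_dist E u v \<noteq> \<infinity> \<longrightarrow>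
        hop_dist EK u v \<noteq> \<infinity> \<and> real (the_enat (hop_dist EK u v)) \<le> t * real (the_enat (hop_dist E u v)))"

end

theory Submission
  imports Defs
begin

text \<open>Fix an edge ab of G and let f be the hop distance from a in H, truncated so that it
  is finite; f changes by at most 1 along every edge of H. The level-set indicators
  x_i = [i < f] have H-energies summing to the H-energy of f (as f is 1-Lipschitz on H) and
  G-energies summing to the G-variation, the sum of |f u - f v| over the edges uv of G
  (coarea formula). Applying both sparsifier inequalities to f and to every x_i bounds the
  G-energy of f by c times its G-variation, where c = (1 + eps) / (1 - eps), and AM-GM turns
  this into G-energy <= c^2 m. Hence d_H(a, b) <= c sqrt m <= 2 sqrt m for every edge ab of G,
  so H is a (2 sqrt m)-spanner; no polylogarithmic factor is needed.\<close>

lemma is_walk_singleton [simp]: "is_walk E [x]"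
  by (simp add: is_walk_def)

lemma is_walk_Cons_Cons [simp]:
  "is_walk E (x # y # p) \<longleftrightarrow> {x, y} \<in> E \<and> is_walk E (y # p)"
  unfolding is_walk_def by (auto simp: less_Suc_eq_0_disj)

lemma is_walk_append:
  assumes "is_walk E p" "is_walk E q" "last p = hd q"
  shows "is_walk E (p @ tl q)"
  using assms
proof (induction p rule: induct_list012)
  case (2 x)
  then show ?case by (metis append_Cons append_Nil is_walk_def last_ConsL list.collapse)
next
  case (3 x y p)
  then show ?case by simp
qed (simp add: is_walk_def)

lemma hop_dist_le_walk:
  "is_walk E p \<Longrightarrow> hop_dist E (hd p) (last p) \<le> enat (length p - 1)"
  unfolding hop_dist_def by (rule Inf_lower) blast

lemma hop_dist_refl [simp]: "hop_dist E u u = 0"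
  using hop_dist_le_walk[of E "[u]"] by (simp add: zero_enat_def[symmetric])

lemma hop_dist_edge: "{u, v} \<in> E \<Longrightarrow> hop_dist E u v \<le> 1"
  using hop_dist_le_walk[of E "[u, v]"] by (simp add: one_enat_def)

lemma hop_dist_enatE:
  assumes "hop_dist E u v = enat d"
  obtains p where "is_walk E p" "hd p = u" "last p = v" "length p - 1 = d"
proof -
  let ?S = "{enat (length p - 1) | p. is_walk E p \<and> hd p = u \<and> last p = v}"
  have "?S \<noteq> {}"
  proof
    assume "?S = {}"
    then have "hop_dist E u v = \<infinity>"
      unfolding hop_dist_def by (metis Inf_empty top_enat_def)
    with assms show False by simp
  qed
  then have "Inf ?S \<in> ?S"
    by (meson ex_in_conv wellorder_InfI)
  then show ?thesis using assms that unfolding hop_dist_def by auto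
qed

lemma hop_dist_triangle: "hop_dist E u w \<le> hop_dist E u v + hop_dist E v w"
proof (cases "hop_dist E u v")
  case (enat d1)
  show ?thesis
  proof (cases "hop_dist E v w")
    case (enat d2)
    obtain p where p: "is_walk E p" "hd p = u" "last p = v" "length p - 1 = d1"
      using \<open>hop_dist E u v = enat d1\<close> by (rule hop_dist_enatE)
    obtain q where q: "is_walk E q" "hd q = v" "last q = w" "length q - 1 = d2"
      using \<open>hop_dist E v w = enat d2\<close> by (rule hop_dist_enatE)
    have "p \<noteq> []" "q \<noteq> []"
      using p q by (simp_all add: is_walk_def)
    then have "hd (p @ tl q) = u" "last (p @ tl q) = w" "length (p @ tl q) - 1 = d1 + d2"
      using p q by (auto simp: last_append last_tl Suc_le_eq) (metis last_ConsL list.collapse)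
    then show ?thesis
      using hop_dist_le_walk[OF is_walk_append[of E p q]] p q enat \<open>hop_dist E u v = enat d1\<close>
      by simp
  qed simp
qed simp

lemma hop_dist_le_stretch:
  assumes stretch: "\<And>y z. {y, z} \<in> E \<Longrightarrow> hop_dist E' y z \<le> enat K"
    and "hop_dist E u v = enat d"
  shows "hop_dist E' u v \<le> enat (K * d)"
proof -
  obtain p where "is_walk E p" "hd p = u" "last p = v" "length p - 1 = d"
    using \<open>hop_dist E u v = enat d\<close> by (rule hop_dist_enatE)
  moreover have "hop_dist E' (hd p) (last p) \<le> enat (K * (length p - 1))" if "is_walk E p" for p
    using that
  proof (induction p rule: induct_list012)
    case (3 x y p)
    have "hop_dist E' x (last (y # p)) \<le> hop_dist E' x y + hop_dist E' y (last (y # p))"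
      by (rule hop_dist_triangle)
    also have "\<dots> \<le> enat K + enat (K * (length (y # p) - 1))"
      using 3 stretch by (intro add_mono) auto
    finally show ?case by simp
  qed (simp_all add: is_walk_def zero_enat_def)
  ultimately show ?thesis by blast
qed

lemma spanner_if_edges_stretched:
  assumes "E' \<subseteq> E" and stretch: "\<And>y z. {y, z} \<in> E \<Longrightarrow> hop_dist E' y z \<le> enat K"
    and "real K \<le> t"
  shows "spanner t V E E'"
  unfolding spanner_def
proof (intro conjI ballI impI \<open>E' \<subseteq> E\<close>)
  fix u v assume "hop_dist E u v \<noteq> \<infinity>"
  then obtain d where d: "hop_dist E u v = enat d" by auto
  then obtain d' where d': "hop_dist E' u v = enat d'" "d' \<le> K * d"
    using hop_dist_le_stretch[OF stretch d] by (cases "hop_dist E' u v") auto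
  show "hop_dist E' u v \<noteq> \<infinity>" using d' by simp
  have "real d' \<le> real K * real d"
    using d' by (metis of_nat_le_iff of_nat_mult)
  also have "\<dots> \<le> t * real d"
    using \<open>real K \<le> t\<close> by (intro mult_right_mono) auto
  finally show "real (the_enat (hop_dist E' u v)) \<le> t * real (the_enat (hop_dist E u v))"
    using d d' by simp
qed

lemma simple_graph_finite_edges: "simple_graph V E \<Longrightarrow> finite E"
  unfolding simple_graph_def by (meson Pow_iff finite_Pow_iff finite_subset subsetI)

lemma simple_graph_edgeE:
  assumes "simple_graph V E" "e \<in> E"
  obtains a b where "a \<noteq> b" "e = {a, b}" "a \<in> V" "b \<in> V"
  using assms unfolding simple_graph_def by (metis card_2_iff insert_subset)

definition edge_diff :: "(nat \<Rightarrow> real) \<Rightarrow> nat set \<Rightarrow> real" where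
  "edge_diff x e = (\<Sum>u\<in>e. \<Sum>v\<in>e. \<bar>x u - x v\<bar>) / 2"

lemma edge_diff_doubleton [simp]: "a \<noteq> b \<Longrightarrow> edge_diff x {a, b} = \<bar>x a - x b\<bar>"
  unfolding edge_diff_def by (simp add: abs_minus_commute)

definition energy :: "nat set set \<Rightarrow> (nat set \<Rightarrow> real) \<Rightarrow> (nat \<Rightarrow> real) \<Rightarrow> real" where
  "energy F w x = (\<Sum>e\<in>F. w e * (edge_diff x e)\<^sup>2)"

lemma laplacian_singleton:
  "laplacian {e} (\<lambda>_. 1) u v = (if u = v then of_bool (u \<in> e) else - of_bool (e = {u, v}))"
  by (auto simp: laplacian_def Collect_conv_if)

lemma laplacian_eq_sum_edge_laplacians:
  assumes "finite F"
  shows "laplacian F w u v = (\<Sum>e\<in>F. w e * laplacian {e} (\<lambda>_. 1) u v)"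
proof (cases "u = v")
  case True
  have "laplacian F w u v = (\<Sum>e\<in>F. w e * of_bool (u \<in> e))"
    using assms True unfolding laplacian_def
    by (simp add: sum.inter_filter[OF assms, symmetric] Collect_conj_eq)
  then show ?thesis
    using True by (simp add: laplacian_singleton)
next
  case False
  have "laplacian F w u v = - (\<Sum>e\<in>F. w e * of_bool (e = {u, v}))"
    using assms False by (simp add: laplacian_def)
  then show ?thesis
    using False by (simp add: laplacian_singleton sum_negf)
qed

lemma quad_form_edge_laplacian:
  assumes "finite V" "a \<in> V" "b \<in> V" "a \<noteq> b"
  shows "quad_form V (laplacian {{a, b}} (\<lambda>_. 1)) x = (x a - x b)\<^sup>2"
proof -
  let ?L = "laplacian {{a, b}} (\<lambda>_. 1)"
  have zero: "?L u v = 0" if "u \<notin> {a, b} \<or> v \<notin> {a, b}" for u v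
    using that by (auto simp: laplacian_singleton doubleton_eq_iff)
  have "quad_form V ?L x = (\<Sum>u\<in>{a, b}. \<Sum>v\<in>V. x u * ?L u v * x v)"
    unfolding quad_form_def using assms zero by (intro sum.mono_neutral_right) auto
  also have "\<dots> = (\<Sum>u\<in>{a, b}. \<Sum>v\<in>{a, b}. x u * ?L u v * x v)"
    using assms zero by (intro sum.cong refl sum.mono_neutral_right) auto
  also have "\<dots> = (x a - x b)\<^sup>2"
    using assms
    by (simp add: laplacian_singleton insert_commute power2_diff power2_eq_square algebra_simps)
  finally show ?thesis .
qed

lemma quad_form_laplacian:
  assumes G: "simple_graph V E" and "F \<subseteq> E"
  shows "quad_form V (laplacian F w) x = energy F w x"
proof -
  have "finite V" "finite F"
    using G \<open>F \<subseteq> E\<close> simple_graph_finite_edges finite_subset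
    unfolding simple_graph_def by blast+
  have "quad_form V (laplacian F w) x
      = (\<Sum>e\<in>F. w e * quad_form V (laplacian {e} (\<lambda>_. 1)) x)"
    unfolding quad_form_def laplacian_eq_sum_edge_laplacians[OF \<open>finite F\<close>]
    by (simp add: sum_distrib_left sum_distrib_right sum.swap[of _ V F] algebra_simps)
  also have "\<dots> = energy F w x"
    unfolding energy_def
  proof (intro sum.cong refl)
    fix e assume "e \<in> F"
    then obtain a b where "a \<noteq> b" "e = {a, b}" "a \<in> V" "b \<in> V"
      using G \<open>F \<subseteq> E\<close> simple_graph_edgeE by blast
    then show "w e * quad_form V (laplacian {e} (\<lambda>_. 1)) x = w e * (edge_diff x e)\<^sup>2"
      using \<open>finite V\<close> by (simp add: quad_form_edge_laplacian)
  qed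
  finally show ?thesis .
qed

lemma quad_form_scale: "quad_form V (\<lambda>u v. c * L u v) x = c * quad_form V L x"
  unfolding quad_form_def by (simp add: sum_distrib_left algebra_simps)

lemma spectral_sparsifier_energy:
  assumes G: "simple_graph V E" and sp: "spectral_sparsifier eps V E EH w"
  shows "(1 - eps) * energy EH w x \<le> energy E (\<lambda>_. 1) x"
    and "energy E (\<lambda>_. 1) x \<le> (1 + eps) * energy EH w x"
  using sp quad_form_laplacian[OF G] quad_form_laplacian[OF G order_refl]
  unfolding spectral_sparsifier_def loewner_le_def quad_form_scale by auto

lemma sum_abs_of_bool_less_diff:
  "(\<Sum>i<N. \<bar>of_bool (i < p) - of_bool (i < q)\<bar> :: real) = \<bar>real (min p N) - real (min q N)\<bar>"
  by (induction N) (auto simp: min_def)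

lemma edge_diff_coarea:
  assumes "a \<noteq> b" "f a \<le> N" "f b \<le> N"
  shows "(\<Sum>i<N. (edge_diff (\<lambda>y. of_bool (i < f y)) {a, b})\<^sup>2)
           = edge_diff (\<lambda>y. real (f y)) {a, b}"
proof -
  have "(\<bar>of_bool P - of_bool Q\<bar> :: real)\<^sup>2 = \<bar>of_bool P - of_bool Q\<bar>" for P Q
    by (cases P; cases Q) simp_all
  moreover have "(\<Sum>i<N. \<bar>of_bool (i < f a) - of_bool (i < f b)\<bar> :: real) = \<bar>real (f a) - real (f b)\<bar>"
    using sum_abs_of_bool_less_diff[where N = N and p = "f a" and q = "f b"]
    unfolding min_absorb1[OF assms(2)] min_absorb1[OF assms(3)] .
  ultimately show ?thesis
    using assms by simp
qed

lemma sum_squares_le_card: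
  fixes s :: "'a \<Rightarrow> real"
  assumes "0 < c" and "(\<Sum>x\<in>A. (s x)\<^sup>2) \<le> c * (\<Sum>x\<in>A. s x)"
  shows "(\<Sum>x\<in>A. (s x)\<^sup>2) \<le> c\<^sup>2 * card A"
proof -
  have "c * s x \<le> (s x)\<^sup>2 / 2 + c\<^sup>2 / 2" for x
    using zero_le_power2[of "s x - c"] by (simp add: power2_diff power2_eq_square field_simps)
  then have "(\<Sum>x\<in>A. c * s x) \<le> (\<Sum>x\<in>A. (s x)\<^sup>2 / 2 + c\<^sup>2 / 2)"
    by (rule sum_mono)
  then have "c * (\<Sum>x\<in>A. s x) \<le> (\<Sum>x\<in>A. (s x)\<^sup>2) / 2 + c\<^sup>2 / 2 * card A"
    by (simp add: sum_distrib_left sum.distrib sum_divide_distrib mult.commute)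
  with assms(2) show ?thesis by simp
qed

lemma sparsifier_energy_le_variation:
  assumes G: "simple_graph V E" and sp: "spectral_sparsifier eps V E EH w"
    and eps: "0 \<le> eps" "eps < 1"
    and bounded: "\<And>y. y \<in> V \<Longrightarrow> f y \<le> N"
    and lipschitz: "\<And>y z. {y, z} \<in> EH \<Longrightarrow> f z \<le> f y + 1"
  shows "energy E (\<lambda>_. 1) (\<lambda>y. real (f y))
           \<le> (1 + eps) / (1 - eps) * (\<Sum>e\<in>E. edge_diff (\<lambda>y. real (f y)) e)"
proof -
  let ?l = "\<lambda>y. real (f y)"
  let ?x = "\<lambda>i y. of_bool (i < f y) :: real"
  have "EH \<subseteq> E"
    using sp unfolding spectral_sparsifier_def by blast
  have coarea: "(\<Sum>i<N. (edge_diff (?x i) e)\<^sup>2) = edge_diff ?l e" if "e \<in> E" for e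
  proof -
    obtain a b where ab: "a \<noteq> b" "e = {a, b}" "a \<in> V" "b \<in> V"
      using simple_graph_edgeE[OF G \<open>e \<in> E\<close>] .
    show ?thesis
      unfolding ab(2) using ab(1) bounded[OF ab(3)] bounded[OF ab(4)] by (rule edge_diff_coarea)
  qed
  have integral_H: "(edge_diff ?l e)\<^sup>2 = edge_diff ?l e" if "e \<in> EH" for e
  proof -
    obtain a b where ab: "a \<noteq> b" "e = {a, b}"
      using simple_graph_edgeE[OF G subsetD[OF \<open>EH \<subseteq> E\<close> \<open>e \<in> EH\<close>]] by metis
    have "f b \<le> f a + 1" "f a \<le> f b + 1"
      using lipschitz \<open>e \<in> EH\<close> ab(2) insert_commute by metis+
    then consider "f a = f b" | "f a = f b + 1" | "f b = f a + 1"
      by linarith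
    then show ?thesis
      using ab by cases simp_all
  qed
  have energy_H: "energy EH w ?l = (\<Sum>i<N. energy EH w (?x i))"
  proof -
    have "energy EH w ?l = (\<Sum>e\<in>EH. w e * (\<Sum>i<N. (edge_diff (?x i) e)\<^sup>2))"
      unfolding energy_def using integral_H coarea \<open>EH \<subseteq> E\<close> by (intro sum.cong) auto
    then show ?thesis
      unfolding energy_def sum_distrib_left by (simp add: sum.swap[of _ EH])
  qed
  have energy_G: "(\<Sum>i<N. energy E (\<lambda>_. 1) (?x i)) = (\<Sum>e\<in>E. edge_diff ?l e)"
    unfolding energy_def mult_1 using coarea by (subst sum.swap) (rule sum.cong[OF refl])
  have "(1 - eps) * energy E (\<lambda>_. 1) ?l \<le> (1 - eps) * ((1 + eps) * energy EH w ?l)"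
    using spectral_sparsifier_energy(2)[OF G sp] eps by (intro mult_left_mono) auto
  also have "\<dots> = (1 + eps) * (\<Sum>i<N. (1 - eps) * energy EH w (?x i))"
    unfolding energy_H sum_distrib_left by (simp add: algebra_simps)
  also have "\<dots> \<le> (1 + eps) * (\<Sum>i<N. energy E (\<lambda>_. 1) (?x i))"
    using spectral_sparsifier_energy(1)[OF G sp] eps by (intro mult_left_mono sum_mono) auto
  finally show ?thesis
    using eps unfolding energy_G by (simp add: field_simps)
qed

lemma sparsifier_lipschitz_bound:
  assumes G: "simple_graph V E" and sp: "spectral_sparsifier eps V E EH w"
    and eps: "0 \<le> eps" "eps < 1"
    and lipschitz: "\<And>y z. {y, z} \<in> EH \<Longrightarrow> f z \<le> f y + 1"
    and "{a, b} \<in> E"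
  shows "\<bar>real (f a) - real (f b)\<bar> \<le> (1 + eps) / (1 - eps) * sqrt (card E)"
proof -
  let ?l = "\<lambda>y. real (f y)"
  let ?c = "(1 + eps) / (1 - eps)"
  have "0 < ?c" using eps by simp
  have "finite V" using G unfolding simple_graph_def by blast
  have "(\<Sum>e\<in>E. (edge_diff ?l e)\<^sup>2) \<le> ?c * (\<Sum>e\<in>E. edge_diff ?l e)"
  proof -
    have "f y \<le> Max (f ` V)" if "y \<in> V" for y
      using \<open>finite V\<close> that by simp
    from sparsifier_energy_le_variation[OF G sp eps this lipschitz]
    show ?thesis unfolding energy_def by simp
  qed
  then have "(\<Sum>e\<in>E. (edge_diff ?l e)\<^sup>2) \<le> ?c\<^sup>2 * card E"
    using \<open>0 < ?c\<close> by (rule sum_squares_le_card[rotated])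
  moreover have "\<bar>?l a - ?l b\<bar>\<^sup>2 \<le> (\<Sum>e\<in>E. (edge_diff ?l e)\<^sup>2)"
  proof -
    have "a \<noteq> b"
      using simple_graph_edgeE[OF G \<open>{a, b} \<in> E\<close>] by (metis doubleton_eq_iff)
    then have "\<bar>?l a - ?l b\<bar>\<^sup>2 = (edge_diff ?l {a, b})\<^sup>2"
      by simp
    also have "\<dots> \<le> (\<Sum>e\<in>E. (edge_diff ?l e)\<^sup>2)"
      using simple_graph_finite_edges[OF G] \<open>{a, b} \<in> E\<close> by (intro member_le_sum) auto
    finally show ?thesis .
  qed
  ultimately have "\<bar>?l a - ?l b\<bar>\<^sup>2 \<le> (?c * sqrt (card E))\<^sup>2"
    unfolding power_mult_distrib real_sqrt_pow2[OF of_nat_0_le_iff] by linarith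
  moreover have "0 \<le> ?c * sqrt (card E)"
    using \<open>0 < ?c\<close> by (intro mult_nonneg_nonneg) auto
  ultimately show ?thesis
    by (rule power2_le_imp_le)
qed

lemma hop_dist_edge_step: "{y, z} \<in> E \<Longrightarrow> hop_dist E a z \<le> hop_dist E a y + 1"
  by (metis add_left_mono hop_dist_edge hop_dist_triangle order_trans)

lemma the_enat_min_step:
  "x \<le> y + 1 \<Longrightarrow> the_enat (min x (enat N)) \<le> the_enat (min y (enat N)) + 1"
  by (cases x; cases y) (auto simp: one_enat_def)

lemma sparsifier_hop_dist_edge:
  assumes G: "simple_graph V E" and sp: "spectral_sparsifier eps V E EH w"
    and eps: "0 \<le> eps" "eps < 1"
    and "{a, b} \<in> E"
  shows "hop_dist EH a b \<le> enat (nat \<lfloor>(1 + eps) / (1 - eps) * sqrt (card E)\<rfloor>)"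
proof -
  define K where "K = nat \<lfloor>(1 + eps) / (1 - eps) * sqrt (card E)\<rfloor>"
  \<comment> \<open>Truncating at K + 1 keeps f finite even if b is unreachable in H; then f b \<le> K
     forces the distance itself to be at most K.\<close>
  define f where "f y = the_enat (min (hop_dist EH a y) (enat (Suc K)))" for y
  have "f z \<le> f y + 1" if "{y, z} \<in> EH" for y z
    unfolding f_def using hop_dist_edge_step[OF that] by (rule the_enat_min_step)
  then have "\<bar>real (f a) - real (f b)\<bar> \<le> (1 + eps) / (1 - eps) * sqrt (card E)"
    by (rule sparsifier_lipschitz_bound[OF G sp eps _ \<open>{a, b} \<in> E\<close>])
  then have "f b \<le> K"
    unfolding K_def by (simp add: f_def zero_enat_def le_nat_floor)
  then show ?thesis
    unfolding f_def K_def[symmetric]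
    by (cases "hop_dist EH a b") (auto simp: min_def split: if_splits)
qed

theorem theorem4p2:
  "\<exists>C::real. \<exists>k::nat. C > 0 \<and>
     (\<forall>V E EH w eps. simple_graph V E \<longrightarrow> 0 < eps \<longrightarrow> eps \<le> 1/18 \<longrightarrow>
        spectral_sparsifier eps V E EH w \<longrightarrow>
        spanner (C * sqrt (real (card E)) * (1 + ln (real (card V))) ^ k) V E EH)"
proof (intro exI[of _ "2::real"] exI[of _ "0::nat"] conjI allI impI)
  show "(0::real) < 2" by simp
  fix V E EH w and eps :: real
  assume G: "simple_graph V E" and "0 < eps" "eps \<le> 1/18"
    and sp: "spectral_sparsifier eps V E EH w"
  let ?K = "nat \<lfloor>2 * sqrt (card E)\<rfloor>"
  have "(1 + eps) / (1 - eps) * sqrt (card E) \<le> 2 * sqrt (card E)"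
    using \<open>eps \<le> 1/18\<close> by (intro mult_right_mono) (auto simp: field_simps)
  then have "nat \<lfloor>(1 + eps) / (1 - eps) * sqrt (card E)\<rfloor> \<le> ?K"
    by (intro nat_mono floor_mono)
  then have "hop_dist EH y z \<le> enat ?K" if "{y, z} \<in> E" for y z
    using sparsifier_hop_dist_edge[OF G sp _ _ that] \<open>0 < eps\<close> \<open>eps \<le> 1/18\<close>
    by (simp add: order_trans)
  with sp show "spanner (2 * sqrt (card E) * (1 + ln (card V)) ^ 0) V E EH"
    unfolding spectral_sparsifier_def by (intro spanner_if_edges_stretched[where K = ?K]) simp_all
qed

end
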